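(* Let $\pi\in\mathsf{G}_{r,n}$ and $a=\text{A-code}(\pi)$. Then, for each $0\le t\le r-1$, (1) $\mathsf{Rmil}(\pi)=\mathsf{Max}(a)$ and $\mathsf{Rmil}^t(\pi)=\mathsf{Max}^t(a)$; (2) $\mathsf{Lmil}(\pi)=\mathsf{Min}(a)$ and $\mathsf{Lmil}^t(\pi)=\mathsf{Min}^t(a)$; (3) $\mathsf{Lmap}(\pi)=\mathsf{Rmil}(a)$ and $\mathsf{Lmap}^t(\pi)=\mathsf{Rmil}^t(a)$; (4) $\mathsf{Lmal}(\pi)=\mathsf{Rmip}(a)$ and $\mathsf{Lmal}^t(\pi)=\mathsf{Rmip}^t(a)$.
   Context: $\mathsf{G}_{r,n}=C_r\wr\mathfrak S_n$: elements are words $\pi=\sigma_1^{[z_1]}\cdots\sigma_n^{[z_n]}$ with $\sigma\in\mathfrak S_n$ (base values) and colors $z_i\in\{0,\dots,r-1\}$. A-code: set $\pi^{(n)}=\pi$; for $j=n,\dots,1$, if the letter with base value $j$ is at position $p$ of $\pi^{(j)}$ with color $t$, put $c_j=p$, $e_j=t$, and delete that letter to get $\pi^{(j-1)}$; $\text{A-code}(\pi)=(c_1^{[e_1]},\dots,c_n^{[e_n]})$. Statistics of $\pi$: $\mathsf{Rmil}(\pi)=\{\sigma_i^{[z_i]}:\sigma_i<\sigma_j\ \forall j>i\}$; $\mathsf{Lmil}(\pi)=\{\sigma_i^{[z_i]}:\sigma_i<\sigma_j\ \forall j<i\}$; $\mathsf{Lmal}(\pi)=\{\sigma_i^{[z_i]}:\sigma_i>\sigma_j\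 \forall j<i\}$; $\mathsf{Lmap}(\pi)=\{i^{[z_i]}:\sigma_i>\sigma_j\ \forall j<i\}$. Statistics of a sequence $a=(c_1^{[e_1]},\dots,c_n^{[e_n]})$: $\mathsf{Max}(a)=\{i^{[e_i]}:c_i=i\}$; $\mathsf{Min}(a)=\{i^{[e_i]}:c_i=1\}$; $\mathsf{Rmil}(a)=\{c_i^{[e_i]}:c_i<c_j\ \forall j>i\}$; $\mathsf{Rmip}(a)=\{i^{[e_i]}:c_i<c_j\ \forall j>i\}$. For any such set $S$ of colored letters and $t\in\{0,\dots,r-1\}$, $S^t:=\{k: k^{[t]}\in S\}$ (e.g. $\mathsf{Rmil}^t(\pi)$, $\mathsf{Max}^t(a)$). *)

theory Defs
  imports Main
begin

text \<open>A colored letter k^[t] is the pair (k, t). An element of G_{r,n} is a word,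
  represented as a list of colored letters (sigma_i, z_i), i = 1..n (list index i-1).\<close>

definition colored_perm :: "nat \<Rightarrow> nat \<Rightarrow> (nat \<times> nat) list \<Rightarrow> bool" where
  "colored_perm r n w \<longleftrightarrow> length w = n \<and> distinct (map fst w) \<and>
     set (map fst w) = {1..n} \<and> (\<forall>x\<in>set w. snd x < r)"

text \<open>0-based position of the letter with base value v.\<close>
definition pos_of :: "(nat \<times> nat) list \<Rightarrow> nat \<Rightarrow> nat" where
  "pos_of w v = (LEAST i. i < length w \<and> fst (w ! i) = v)"

definition del_at :: "nat \<Rightarrow> 'a list \<Rightarrow> 'a list" where
  "del_at p w = take p w @ drop (Suc p) w"

text \<open>acode_aux w j: given pi^(j) = w, returns (c_1^[e_1], ..., c_j^[e_j]).\<close>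
fun acode_aux :: "(nat \<times> nat) list \<Rightarrow> nat \<Rightarrow> (nat \<times> nat) list" where
  "acode_aux w 0 = []"
| "acode_aux w (Suc j) =
     (let p = pos_of w (Suc j)
      in acode_aux (del_at p w) j @ [(Suc p, snd (w ! p))])"

definition acode :: "(nat \<times> nat) list \<Rightarrow> (nat \<times> nat) list" where
  "acode w = acode_aux w (length w)"

text \<open>Statistics of a word pi (positions i are 1-based: list index k corresponds to i = k+1).\<close>
definition Rmil_w :: "(nat \<times> nat) list \<Rightarrow> (nat \<times> nat) set" where
  "Rmil_w w = {w ! k | k. k < length w \<and> (\<forall>j. k < j \<and> j < length w \<longrightarrow> fst (w ! k) < fst (w ! j))}"

definition Lmil_w :: "(nat \<times> nat) list \<Rightarrow> (nat \<times> nat) set" where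
  "Lmil_w w = {w ! k | k. k < length w \<and> (\<forall>j<k. fst (w ! k) < fst (w ! j))}"

definition Lmal_w :: "(nat \<times> nat) list \<Rightarrow> (nat \<times> nat) set" where
  "Lmal_w w = {w ! k | k. k < length w \<and> (\<forall>j<k. fst (w ! k) > fst (w ! j))}"

definition Lmap_w :: "(nat \<times> nat) list \<Rightarrow> (nat \<times> nat) set" where
  "Lmap_w w = {(Suc k, snd (w ! k)) | k. k < length w \<and> (\<forall>j<k. fst (w ! k) > fst (w ! j))}"

text \<open>Statistics of a sequence a = (c_1^[e_1], ..., c_n^[e_n]) (list index k is i = k+1).\<close>
definition Max_s :: "(nat \<times> nat) list \<Rightarrow> (nat \<times> nat) set" where
  "Max_s a = {(Suc k, snd (a ! k)) | k. k < length a \<and> fst (a ! k) = Suc k}"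

definition Min_s :: "(nat \<times> nat) list \<Rightarrow> (nat \<times> nat) set" where
  "Min_s a = {(Suc k, snd (a ! k)) | k. k < length a \<and> fst (a ! k) = 1}"

definition Rmil_s :: "(nat \<times> nat) list \<Rightarrow> (nat \<times> nat) set" where
  "Rmil_s a = {a ! k | k. k < length a \<and> (\<forall>j. k < j \<and> j < length a \<longrightarrow> fst (a ! k) < fst (a ! j))}"

definition Rmip_s :: "(nat \<times> nat) list \<Rightarrow> (nat \<times> nat) set" where
  "Rmip_s a = {(Suc k, snd (a ! k)) | k. k < length a \<and> (\<forall>j. k < j \<and> j < length a \<longrightarrow> fst (a ! k) < fst (a ! j))}"

definition col_part :: "(nat \<times> nat) set \<Rightarrow> nat \<Rightarrow> nat set" where
  "col_part S t = {k. (k, t) \<in> S}"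

end

theory Submission
  imports Defs
begin

text \<open>Letter n is the largest, so deleting it from \<pi> (the first step of the A-code, which
  records its position c_n and colour e_n) changes no other letter's status as a right-to-left
  minimum or a left-to-right minimum, nor, for letters to its left, as a left-to-right maximum.
  Letter n itself is a right-to-left minimum iff c_n = n, a left-to-right minimum iff c_n = 1,
  and always a left-to-right maximum, while no letter to its right is one. Appending c_n^[e_n] to
  the A-code of the shorter word affects Max, Min and the right-to-left minima in exactly the same
  way: earlier entries c_j stay right-to-left minima iff c_j < c_n, i.e. iff letter j stands left
  of letter n.\<close>

lemma Collect_less_Suc_first:
  "{f k | k. k < Suc n \<and> P k} = (if P 0 then {f 0} else {}) \<union> {f (Suc k) | k. k < n \<and> P (Suc k)}"
  by (auto simp: less_Suc_eq_0_disj)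

lemma Collect_less_Suc_last:
  "{f k | k. k < Suc n \<and> P k} = {f k | k. k < n \<and> P k} \<union> (if P n then {f n} else {})"
  by (auto simp: less_Suc_eq)

lemma all_between_less_Suc_shift:
  "(\<forall>j. k < j \<and> j < Suc n \<longrightarrow> P j) \<longleftrightarrow> (\<forall>j. k \<le> j \<and> j < n \<longrightarrow> P (Suc j))"
proof (intro iffI allI impI)
  fix j assume "\<forall>j. k \<le> j \<and> j < n \<longrightarrow> P (Suc j)" "k < j \<and> j < Suc n"
  then show "P j" by (cases j) auto
qed simp

lemma all_between_less_Suc:
  "(\<forall>j. k < j \<and> j < Suc n \<longrightarrow> P j) \<longleftrightarrow> (\<forall>j. k < j \<and> j < n \<longrightarrow> P j) \<and> (k < n \<longrightarrow> P n)"
  by (auto simp: less_Suc_eq)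

text \<open>Left-to-right maxima of a word are recorded as (letter, position, colour) and right-to-left
  minima of a sequence as (index, entry, colour), so that \<open>Lmal_w\<close>, \<open>Lmap_w\<close>, \<open>Rmip_s\<close> and
  \<open>Rmil_s\<close> are projections and parts (3) and (4) become the single identity
  \<open>Lma_w \<pi> = Rmi_s (acode \<pi>)\<close>.\<close>

definition Lma_w :: "(nat \<times> nat) list \<Rightarrow> (nat \<times> nat \<times> nat) set" where
  "Lma_w w = {(fst (w ! k), Suc k, snd (w ! k)) | k. k < length w \<and> (\<forall>j<k. fst (w ! j) < fst (w ! k))}"

definition Rmi_s :: "(nat \<times> nat) list \<Rightarrow> (nat \<times> nat \<times> nat) set" where
  "Rmi_s a = {(Suc k, fst (a ! k), snd (a ! k)) | k. k < length a \<and>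
     (\<forall>j. k < j \<and> j < length a \<longrightarrow> fst (a ! k) < fst (a ! j))}"

lemma Collect_eq_image: "{f k | k. P k} = f ` {k. P k}"
  by blast

lemma Lmal_w_eq_image_Lma_w: "Lmal_w w = (\<lambda>(v, i, c). (v, c)) ` Lma_w w"
  unfolding Lmal_w_def Lma_w_def Collect_eq_image image_comp by (simp add: comp_def)

lemma Lmap_w_eq_image_Lma_w: "Lmap_w w = (\<lambda>(v, i, c). (i, c)) ` Lma_w w"
  unfolding Lmap_w_def Lma_w_def Collect_eq_image image_comp by (simp add: comp_def)

lemma Rmip_s_eq_image_Rmi_s: "Rmip_s a = (\<lambda>(i, v, c). (i, c)) ` Rmi_s a"
  unfolding Rmip_s_def Rmi_s_def Collect_eq_image image_comp by (simp add: comp_def case_prod_beta)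

lemma Rmil_s_eq_image_Rmi_s: "Rmil_s a = (\<lambda>(i, v, c). (v, c)) ` Rmi_s a"
  unfolding Rmil_s_def Rmi_s_def Collect_eq_image image_comp by (simp add: comp_def)

lemma Rmil_w_Cons:
  "Rmil_w (x # ys) = (if \<forall>y\<in>set ys. fst x < fst y then insert x (Rmil_w ys) else Rmil_w ys)"
  unfolding Rmil_w_def length_Cons Collect_less_Suc_first all_between_less_Suc_shift
  by (simp add: all_set_conv_all_nth Suc_le_eq, blast)

lemma Lmil_w_snoc:
  "Lmil_w (xs @ [y]) = (if \<forall>x\<in>set xs. fst y < fst x then insert y (Lmil_w xs) else Lmil_w xs)"
  unfolding Lmil_w_def length_append_singleton Collect_less_Suc_last
  by (simp add: all_set_conv_all_nth nth_append cong: conj_cong, blast)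

lemma Lma_w_snoc:
  "Lma_w (xs @ [y]) = (if \<forall>x\<in>set xs. fst x < fst y
     then insert (fst y, Suc (length xs), snd y) (Lma_w xs) else Lma_w xs)"
  unfolding Lma_w_def length_append_singleton Collect_less_Suc_last
  by (simp add: all_set_conv_all_nth nth_append cong: conj_cong, blast)

lemma Lma_w_position_le: "t \<in> Lma_w w \<Longrightarrow> fst (snd t) \<le> length w"
  unfolding Lma_w_def by auto

lemma Max_s_snoc:
  "Max_s (a @ [y]) =
     (if fst y = Suc (length a) then insert (Suc (length a), snd y) (Max_s a) else Max_s a)"
  unfolding Max_s_def length_append_singleton Collect_less_Suc_last
  by (auto simp: nth_append)

lemma Min_s_snoc:
  "Min_s (a @ [y]) = (if fst y = 1 then insert (Suc (length a), snd y) (Min_s a) else Min_s a)"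
  unfolding Min_s_def length_append_singleton Collect_less_Suc_last
  by (auto simp: nth_append)

lemma Rmi_s_snoc:
  "Rmi_s (a @ [y]) = insert (Suc (length a), y) {t \<in> Rmi_s a. fst (snd t) < fst y}"
  unfolding Rmi_s_def length_append_singleton Collect_less_Suc_last all_between_less_Suc
  by (simp add: nth_append cong: conj_cong, fastforce)

lemma Rmil_w_insert_max:
  assumes "\<forall>y\<in>set (xs @ ys). fst y < fst x"
  shows "Rmil_w (xs @ x # ys) = (if ys = [] then insert x (Rmil_w (xs @ ys)) else Rmil_w (xs @ ys))"
  using assms by (induction xs) (auto simp: Rmil_w_Cons neq_Nil_conv)

lemma Lmil_w_insert_max:
  assumes "\<forall>y\<in>set (xs @ ys). fst y < fst x"
  shows "Lmil_w (xs @ x # ys) = (if xs = [] then insert x (Lmil_w (xs @ ys)) else Lmil_w (xs @ ys))"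
  using assms
proof (induction ys rule: rev_induct)
  case Nil
  then show ?case by (auto simp: Lmil_w_snoc neq_Nil_conv)
next
  case (snoc y ys)
  have IH: "Lmil_w (xs @ x # ys) = (if xs = [] then insert x (Lmil_w (xs @ ys)) else Lmil_w (xs @ ys))"
    using snoc by simp
  have "(\<forall>z\<in>set (xs @ x # ys). fst y < fst z) \<longleftrightarrow> (\<forall>z\<in>set (xs @ ys). fst y < fst z)"
    using snoc.prems by auto
  then have "Lmil_w ((xs @ x # ys) @ [y]) =
      (if xs = [] then insert x (Lmil_w ((xs @ ys) @ [y])) else Lmil_w ((xs @ ys) @ [y]))"
    unfolding Lmil_w_snoc IH by auto
  then show ?case by simp
qed

lemma Lma_w_insert_max:
  assumes "\<forall>y\<in>set (xs @ ys). fst y < fst x"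
  shows "Lma_w (xs @ x # ys) =
    insert (fst x, Suc (length xs), snd x) {t \<in> Lma_w (xs @ ys). fst (snd t) \<le> length xs}"
  using assms
proof (induction ys rule: rev_induct)
  case Nil
  then show ?case by (auto simp: Lma_w_snoc dest: Lma_w_position_le)
next
  case (snoc y ys)
  have "Lma_w ((xs @ x # ys) @ [y]) = Lma_w (xs @ x # ys)"
    unfolding Lma_w_snoc using snoc.prems by auto
  moreover have "{t \<in> Lma_w ((xs @ ys) @ [y]). fst (snd t) \<le> length xs} =
      {t \<in> Lma_w (xs @ ys). fst (snd t) \<le> length xs}"
    unfolding Lma_w_snoc by auto
  ultimately show ?case using snoc by simp
qed

lemma pos_of_append_Cons:
  assumes "v \<notin> fst ` set xs"
  shows "pos_of (xs @ (v, c) # ys) v = length xs"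
  unfolding pos_of_def
proof (rule Least_equality)
  fix i assume "i < length (xs @ (v, c) # ys) \<and> fst ((xs @ (v, c) # ys) ! i) = v"
  then show "length xs \<le> i"
    using assms by (metis image_eqI nth_append nth_mem not_le)
qed simp

lemma acode_aux_length: "length (acode_aux w j) = j"
  by (induction w j rule: acode_aux.induct) (simp_all add: Let_def)

lemma acode_insert_max:
  assumes "Suc n \<notin> fst ` set xs" "length (xs @ ys) = n"
  shows "acode (xs @ (Suc n, c) # ys) = acode (xs @ ys) @ [(Suc (length xs), c)]"
proof -
  have "del_at (length xs) (xs @ (Suc n, c) # ys) = xs @ ys"
    by (simp add: del_at_def)
  then show ?thesis
    using assms by (simp add: acode_def pos_of_append_Cons Let_def nth_append)
qed

lemma colored_perm_Suc_split:
  assumes "colored_perm r (Suc n) w"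
  obtains xs c ys where "w = xs @ (Suc n, c) # ys" "Suc n \<notin> fst ` set xs"
    "colored_perm r n (xs @ ys)"
proof -
  from assms obtain c where "(Suc n, c) \<in> set w"
    unfolding colored_perm_def by force
  then obtain xs ys where w: "w = xs @ (Suc n, c) # ys"
    by (meson split_list)
  have "Suc n \<notin> fst ` set (xs @ ys)" "distinct (map fst (xs @ ys))"
    using assms unfolding colored_perm_def w by auto
  moreover have "set (map fst (xs @ ys)) = {1..n}"
  proof -
    have "insert (Suc n) (fst ` set (xs @ ys)) = {1..Suc n}"
      using assms unfolding colored_perm_def w by auto
    then show ?thesis
      using calculation(1) by (simp add: atLeastAtMostSuc_conv insert_ident image_Un)
  qed
  ultimately have "colored_perm r n (xs @ ys)"
    using assms unfolding colored_perm_def w by auto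
  moreover have "Suc n \<notin> fst ` set xs"
    using \<open>Suc n \<notin> fst ` set (xs @ ys)\<close> by auto
  ultimately show thesis
    using that w by blast
qed

lemma acode_statistics:
  assumes "colored_perm r n w"
  shows "Rmil_w w = Max_s (acode w) \<and> Lmil_w w = Min_s (acode w) \<and> Lma_w w = Rmi_s (acode w)"
  using assms
proof (induction n arbitrary: w)
  case 0
  then have "w = []" by (simp add: colored_perm_def)
  then show ?case
    by (simp add: acode_def Rmil_w_def Max_s_def Lmil_w_def Min_s_def Lma_w_def Rmi_s_def)
next
  case (Suc n)
  obtain xs c ys where w: "w = xs @ (Suc n, c) # ys" and new: "Suc n \<notin> fst ` set xs"
    and perm: "colored_perm r n (xs @ ys)"
    using colored_perm_Suc_split[OF Suc.prems] .
  define a where "a = acode (xs @ ys)"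
  have IH: "Rmil_w (xs @ ys) = Max_s a" "Lmil_w (xs @ ys) = Min_s a" "Lma_w (xs @ ys) = Rmi_s a"
    using Suc.IH[OF perm] unfolding a_def by auto
  have len: "length (xs @ ys) = n" "length a = n"
    using perm by (simp_all add: colored_perm_def a_def acode_def acode_aux_length)
  have max: "\<forall>y\<in>set (xs @ ys). fst y < fst (Suc n, c)"
    using perm unfolding colored_perm_def
    by (metis atLeastAtMost_iff fst_conv image_eqI le_imp_less_Suc set_map)
  have code: "acode (xs @ (Suc n, c) # ys) = a @ [(Suc (length xs), c)]"
    unfolding a_def using acode_insert_max[OF new len(1)] .
  have "ys = [] \<longleftrightarrow> length xs = n"
    using len(1) by auto
  then have "Rmil_w w = Max_s (acode w)"
    unfolding w code Rmil_w_insert_max[OF max] Max_s_snoc IH(1) len(2) by simp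
  moreover have "Lmil_w w = Min_s (acode w)"
    unfolding w code Lmil_w_insert_max[OF max] Min_s_snoc IH(2) len(2) by simp
  moreover have "Lma_w w = Rmi_s (acode w)"
    unfolding w code Lma_w_insert_max[OF max] Rmi_s_snoc IH(3) len(2) by (simp add: less_Suc_eq_le)
  ultimately show ?case by blast
qed

theorem lemma3p2:
  fixes r n :: nat and \<pi> :: "(nat \<times> nat) list"
  assumes "colored_perm r n \<pi>"
  defines "a \<equiv> acode \<pi>"
  shows "\<forall>t<r.
     (Rmil_w \<pi> = Max_s a \<and> col_part (Rmil_w \<pi>) t = col_part (Max_s a) t) \<and>
     (Lmil_w \<pi> = Min_s a \<and> col_part (Lmil_w \<pi>) t = col_part (Min_s a) t) \<and>
     (Lmap_w \<pi> = Rmil_s a \<and> col_part (Lmap_w \<pi>) t = col_part (Rmil_s a) t) \<and>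
     (Lmal_w \<pi> = Rmip_s a \<and> col_part (Lmal_w \<pi>) t = col_part (Rmip_s a) t)"
proof -
  have "Rmil_w \<pi> = Max_s a" "Lmil_w \<pi> = Min_s a" "Lma_w \<pi> = Rmi_s a"
    using acode_statistics[OF assms(1)] unfolding a_def by auto
  then have "Rmil_w \<pi> = Max_s a" "Lmil_w \<pi> = Min_s a" "Lmap_w \<pi> = Rmil_s a" "Lmal_w \<pi> = Rmip_s a"
    unfolding Lmap_w_eq_image_Lma_w Rmil_s_eq_image_Rmi_s Lmal_w_eq_image_Lma_w Rmip_s_eq_image_Rmi_s
    by (auto simp: image_image)
  then show ?thesis by simp
qed

end
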